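(* Let $\varrho,\sigma$ be density operators on a finite-dimensional Hilbert space and $\alpha\in(0,1)$. Suppose $D_\alpha^{\mathrm{test}}(\varrho\|\sigma)=D_\alpha^{\mathrm{meas}}(\varrho\|\sigma)$. Then for every orthogonal projection $P$ attaining $\max_{P\text{ projection}}D_\alpha(\mathcal P(\varrho)\|\mathcal P(\sigma))$, with $P^\perp:=I-P$, \[ (\operatorname{Tr}\sigma P)P\varrho P=(\operatorname{Tr}\varrho P)P\sigma P,\qquad (\operatorname{Tr}\sigma P^\perp)P^\perp\varrho P^\perp=(\operatorname{Tr}\varrho P^\perp)P^\perp\sigma P^\perp. \] If moreover $\varrho\ne\sigma$, then $\varrho^0\le\sigma^0$ implies $P\sigma P\ne0$ and $P^\perp\sigma P^\perp\neq0$, and $\varrho^0\ge\sigma^0$ implies $P\varrho P\ne0$ and $P^\perp\varrho P^\perp\ne0$.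
   Context: $A^0$ denotes the support projection of a PSD operator $A$. For probability vectors $p,q$ and $\alpha\in(0,1)$, $D_\alpha(p\|q)=\frac{1}{\alpha-1}\log\sum_xp(x)^\alpha q(x)^{1-\alpha}$. For an operator $0\le T\le I$, $\mathcal T(X):=(\operatorname{Tr}XT,\operatorname{Tr}X(I-T))$ (written $\mathcal P$ when $T=P$ is a projection). $D_\alpha^{\mathrm{test}}(\varrho\|\sigma):=\max_{0\le T\le I}D_\alpha(\mathcal T(\varrho)\|\mathcal T(\sigma))$, which equals the maximum of $D_\alpha(\mathcal P(\varrho)\|\mathcal P(\sigma))$ over projections $P$. For a finite-outcome POVM $M$, $\mathcal M(\varrho):=(\operatorname{Tr}M_x\varrho)_x$, and $D_\alpha^{\mathrm{meas}}(\varrho\|\sigma):=\sup_MD_\alpha(\mathcal M(\varrho)\|\mathcal M(\sigma))$. *)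

theory Defs
  imports "HOL-Analysis.Analysis"
begin

definition adjoint :: "complex^'n^'n \<Rightarrow> complex^'n^'n" where
  "adjoint A = (\<chi> i j. cnj (A $ j $ i))"

definition mscale :: "complex \<Rightarrow> complex^'n^'n \<Rightarrow> complex^'n^'n" where
  "mscale c A = (\<chi> i j. c * A $ i $ j)"

definition qform :: "complex^'n^'n \<Rightarrow> complex^'n \<Rightarrow> complex" where
  "qform A x = (\<Sum>i\<in>UNIV. cnj (x $ i) * (A *v x) $ i)"

definition psd :: "complex^'n^'n \<Rightarrow> bool" where
  "psd A \<longleftrightarrow> adjoint A = A \<and> (\<forall>x. Im (qform A x) = 0 \<and> Re (qform A x) \<ge> 0)"

definition loewner_le :: "complex^'n^'n \<Rightarrow> complex^'n^'n \<Rightarrow> bool" where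
  "loewner_le A B \<longleftrightarrow> psd (B - A)"

definition density :: "complex^'n^'n \<Rightarrow> bool" where
  "density \<rho> \<longleftrightarrow> psd \<rho> \<and> trace \<rho> = 1"

definition is_proj :: "complex^'n^'n \<Rightarrow> bool" where
  "is_proj P \<longleftrightarrow> P ** P = P \<and> adjoint P = P"

definition supp_proj :: "complex^'n^'n \<Rightarrow> complex^'n^'n" where
  "supp_proj A = (THE P. is_proj P \<and> range (\<lambda>x. P *v x) = range (\<lambda>x. A *v x))"

text \<open>Renyi divergence of (probability) vectors p, q on a finite set X, for 0<alpha<1.
  Value +infinity when the sum vanishes (log 0 = -infinity).\<close>
definition renyi :: "real \<Rightarrow> 'x set \<Rightarrow> ('x \<Rightarrow> real) \<Rightarrow> ('x \<Rightarrow> real) \<Rightarrow> ereal" where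
  "renyi \<alpha> X p q = (let s = (\<Sum>x\<in>X. p x powr \<alpha> * q x powr (1 - \<alpha>))
     in if s = 0 then \<infinity> else ereal (ln s / (\<alpha> - 1)))"

definition test_map :: "complex^'n^'n \<Rightarrow> complex^'n^'n \<Rightarrow> bool \<Rightarrow> real" where
  "test_map T X = (\<lambda>b. if b then Re (trace (X ** T)) else Re (trace (X ** (mat 1 - T))))"

definition D_test :: "real \<Rightarrow> complex^'n^'n \<Rightarrow> complex^'n^'n \<Rightarrow> ereal" where
  "D_test \<alpha> \<rho> \<sigma> = (SUP T \<in> {T. psd T \<and> loewner_le T (mat 1)}.
      renyi \<alpha> UNIV (test_map T \<rho>) (test_map T \<sigma>))"

definition povm :: "nat \<Rightarrow> (nat \<Rightarrow> complex^'n^'n) \<Rightarrow> bool" where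
  "povm m M \<longleftrightarrow> (\<forall>i<m. psd (M i)) \<and> (\<Sum>i<m. M i) = mat 1"

definition D_meas :: "real \<Rightarrow> complex^'n^'n \<Rightarrow> complex^'n^'n \<Rightarrow> ereal" where
  "D_meas \<alpha> \<rho> \<sigma> = (SUP mM \<in> {(m, M). povm m M}.
      renyi \<alpha> {..<fst mM} (\<lambda>i. Re (trace (snd mM i ** \<rho>))) (\<lambda>i. Re (trace (snd mM i ** \<sigma>))))"

end

theory Submission
  imports Defs
begin

text \<open>
  For a test \<open>T\<close> the divergence \<open>D\<^sub>\<alpha>(T(\<rho>) || T(\<sigma>))\<close> is a decreasing function of
  \<open>Q(T) = (tr \<rho>T)^\<alpha> (tr \<sigma>T)^(1-\<alpha>) + (tr \<rho>(I-T))^\<alpha> (tr \<sigma>(I-T))^(1-\<alpha>)\<close>.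
  The map \<open>(a, b) \<mapsto> a^\<alpha> b^(1-\<alpha>)\<close> is superadditive, strictly so unless the two summands
  are proportional. Hence \<open>Q\<close> is concave in the eigenvalues of \<open>T\<close>, so some spectral
  projection of \<open>T\<close> does at least as well as \<open>T\<close>; thus \<open>D_test\<close> is the divergence of an
  optimal projection \<open>P\<close>, and the hypothesis gives \<open>D_meas \<le> D\<^sub>\<alpha>(P(\<rho>) || P(\<sigma>))\<close>.

  If \<open>P\<rho>P\<close> and \<open>P\<sigma>P\<close> were not in the ratio \<open>tr \<rho>P : tr \<sigma>P\<close>, some unit vector \<open>x\<close> in the
  range of \<open>P\<close> would tell them apart, and by strict superadditivity the three-outcome
  measurement \<open>{|x><x|, P - |x><x|, I - P}\<close> would beat \<open>P\<close>, contradicting this bound.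
  The same applies to \<open>I - P\<close>, which is optimal as well.
  Finally, if \<open>P\<rho>P = P\<sigma>P = 0\<close> then \<open>P\<close> has divergence 0, while the rank-one projection
  onto any \<open>x\<close> with \<open><x, \<rho>x> \<noteq> <x, \<sigma>x>\<close> has positive divergence; a support inclusion
  makes the vanishing of one compression force the vanishing of the other.
\<close>

section \<open>Inner product, quadratic forms and projections\<close>

definition cinner :: "complex^'n \<Rightarrow> complex^'n \<Rightarrow> complex" where
  "cinner x y = (\<Sum>i\<in>UNIV. cnj (x$i) * y$i)"

lemma qform_eq_cinner: "qform A x = cinner x (A *v x)"
  by (simp add: qform_def cinner_def)

lemma cinner_add_left: "cinner (x + y) z = cinner x z + cinner y z"
  by (simp add: cinner_def distrib_right sum.distrib)

lemma cinner_add_right: "cinner x (y + z) = cinner x y + cinner x z"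
  by (simp add: cinner_def distrib_left sum.distrib)

lemma cinner_diff_right: "cinner x (y - z) = cinner x y - cinner x z"
  by (simp add: cinner_def right_diff_distrib sum_subtractf)

lemma cinner_scale_left: "cinner (c *s x) y = cnj c * cinner x y"
  by (simp add: cinner_def sum_distrib_left algebra_simps)

lemma cinner_scale_right: "cinner x (c *s y) = c * cinner x y"
  by (simp add: cinner_def sum_distrib_left algebra_simps)

lemma cinner_zero_right [simp]: "cinner x 0 = 0"
  by (simp add: cinner_def)

lemma cnj_cinner: "cnj (cinner x y) = cinner y x"
  by (simp add: cinner_def mult.commute)

lemma cinner_self: "cinner x x = complex_of_real ((norm x)^2)"
proof -
  have "cinner x x = (\<Sum>i\<in>UNIV. complex_of_real ((norm (x$i))^2))"
    unfolding cinner_def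
    by (intro sum.cong refl) (simp add: complex_norm_square mult.commute flip: of_real_power)
  also have "\<dots> = complex_of_real (\<Sum>i\<in>UNIV. (norm (x$i))^2)"
    by simp
  also have "(\<Sum>i\<in>UNIV. (norm (x$i))^2) = (norm x)^2"
    by (simp add: norm_vec_def L2_set_def sum_nonneg)
  finally show ?thesis .
qed

lemma cinner_self_eq_0: "cinner x x = 0 \<longleftrightarrow> x = 0"
  by (simp add: cinner_self)

lemma cinner_self_eq_1: "cinner x x = 1 \<longleftrightarrow> norm x = 1"
proof -
  have "cinner x x = 1 \<longleftrightarrow> (norm x)^2 = 1"
    unfolding cinner_self by (rule of_real_eq_1_iff)
  also have "\<dots> \<longleftrightarrow> norm x = 1"
    by (simp add: power2_eq_1_iff) (smt (verit) norm_ge_zero)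
  finally show ?thesis .
qed

lemma vec_eq_if_cinner_eq:
  assumes "\<And>x. cinner x u = cinner x v"
  shows "u = v"
proof -
  have "cinner (u - v) (u - v) = 0"
    using assms[of "u - v"] by (simp add: cinner_diff_right)
  then show ?thesis
    by (simp add: cinner_self_eq_0)
qed

lemma unit_rescaling:
  assumes "v \<noteq> 0"
  obtains c where "cinner (c *s v) (c *s v) = 1"
    and "\<And>A. qform A (c *s v) = qform A v / complex_of_real ((norm v)^2)"
proof
  let ?c = "complex_of_real (1 / norm v)"
  show "cinner (?c *s v) (?c *s v) = 1"
    using assms unfolding cinner_scale_left cinner_scale_right
    by (simp add: cinner_self power2_eq_square)
  show "qform A (?c *s v) = qform A v / complex_of_real ((norm v)^2)" for A
    by (simp add: qform_eq_cinner vector_scalar_commute cinner_scale_left cinner_scale_right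
        power2_eq_square divide_inverse)
qed

lemma adjoint_adjoint [simp]: "adjoint (adjoint A) = A"
  by (simp add: adjoint_def vec_eq_iff)

lemma adjoint_mult: "adjoint (A ** B) = adjoint B ** adjoint (A::complex^'n^'n)"
  by (simp add: adjoint_def vec_eq_iff matrix_matrix_mult_def mult.commute)

lemma adjoint_diff: "adjoint (A - B) = adjoint A - adjoint B"
  by (simp add: adjoint_def vec_eq_iff)

lemma adjoint_mat_1 [simp]: "adjoint (mat 1 :: complex^'n^'n) = mat 1"
  by (simp add: adjoint_def vec_eq_iff mat_def)

lemma cinner_adjoint: "cinner x (A *v y) = cinner (adjoint A *v x) y"
proof -
  have "cinner x (A *v y) = (\<Sum>i\<in>UNIV. \<Sum>j\<in>UNIV. cnj (x$i) * A$i$j * y$j)"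
    by (simp add: cinner_def matrix_vector_mult_def sum_distrib_left mult.assoc)
  also have "\<dots> = (\<Sum>j\<in>UNIV. \<Sum>i\<in>UNIV. cnj (x$i) * A$i$j * y$j)"
    by (rule sum.swap)
  also have "\<dots> = cinner (adjoint A *v x) y"
    by (simp add: cinner_def matrix_vector_mult_def adjoint_def sum_distrib_left sum_distrib_right
        mult.commute mult.left_commute)
  finally show ?thesis .
qed

lemma cinner_hermitian: "adjoint A = A \<Longrightarrow> cinner x (A *v y) = cinner (A *v x) y"
  by (metis cinner_adjoint)

lemma matrix_diff_ldistrib: "A ** (B - C) = A ** B - A ** (C::complex^'n^'n)"
  by (simp add: matrix_eq matrix_vector_mult_diff_distrib matrix_vector_mult_diff_rdistrib
      flip: matrix_vector_mul_assoc)

lemma matrix_diff_rdistrib: "(B - C) ** A = B ** A - C ** (A::complex^'n^'n)"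
  by (simp add: matrix_eq matrix_vector_mult_diff_rdistrib flip: matrix_vector_mul_assoc)

lemma qform_add:
  "qform A (x + y) = qform A x + qform A y + cinner x (A *v y) + cinner y (A *v x)"
  by (simp add: qform_eq_cinner matrix_vector_right_distrib cinner_add_left cinner_add_right)

lemma qform_diff_matrix: "qform (A - B) x = qform A x - qform B x"
  by (simp add: qform_eq_cinner matrix_vector_mult_diff_rdistrib cinner_diff_right)

lemma qform_mscale: "qform (mscale c A) x = c * qform A x"
  by (simp add: qform_def mscale_def matrix_vector_mult_def sum_distrib_left algebra_simps)

lemma hermitian_qform_add_real_scaled:
  assumes "adjoint A = A"
  shows "Re (qform A (x + complex_of_real t *s y)) =
         Re (qform A x) + 2 * t * Re (cinner y (A *v x)) + t^2 * Re (qform A y)"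
proof -
  have "qform A (x + complex_of_real t *s y) =
          qform A x + qform A (complex_of_real t *s y) + cinner x (A *v (complex_of_real t *s y))
          + cinner (complex_of_real t *s y) (A *v x)"
    by (rule qform_add)
  also have "cinner x (A *v (complex_of_real t *s y)) = complex_of_real t * cnj (cinner y (A *v x))"
    using cinner_hermitian[OF assms, of y x]
    by (simp add: vector_scalar_commute cinner_scale_right cnj_cinner)
  finally show ?thesis
    by (simp add: qform_eq_cinner vector_scalar_commute cinner_scale_left cinner_scale_right
        power2_eq_square algebra_simps)
qed

lemma matrix_eq_0_if_qform_eq_0:
  assumes "\<And>x. qform A x = 0"
  shows "A = 0"
proof -
  have "cinner x (A *v y) = 0" for x y
  proof -
    have sum: "cinner x (A *v y) + cinner y (A *v x) = 0"
      using qform_add[of A x y] assms by simp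
    have "cinner x (A *v (\<i> *s y)) + cinner (\<i> *s y) (A *v x) = 0"
      using qform_add[of A x "\<i> *s y"] assms by simp
    then have "cinner x (A *v y) - cinner y (A *v x) = 0"
      by (simp add: vector_scalar_commute cinner_scale_left cinner_scale_right
          flip: right_diff_distrib)
    moreover have "2 * cinner x (A *v y)
        = (cinner x (A *v y) + cinner y (A *v x)) + (cinner x (A *v y) - cinner y (A *v x))"
      by simp
    ultimately show ?thesis
      using sum by simp
  qed
  then have "A *v y = 0" for y
    using vec_eq_if_cinner_eq[of "A *v y" 0] by simp
  then show ?thesis
    by (simp add: matrix_eq)
qed

lemma linear_coeff_eq_0_if_quadratic_nonneg:
  fixes c d :: real
  assumes "\<And>t. 0 \<le> t * c + t^2 * d"
  shows "c = 0"
proof (rule ccontr)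
  assume "c \<noteq> 0"
  define k where "k = \<bar>d\<bar> + 1"
  have k: "k > 0" "d - k < 0"
    by (auto simp: k_def)
  have "(- c / k) * c + (- c / k)^2 * d = c^2 * (d - k) / k^2"
    using k by (simp add: field_simps power2_eq_square)
  also have "\<dots> < 0"
    using k \<open>c \<noteq> 0\<close> by (simp add: divide_neg_pos mult_pos_neg)
  finally show False
    using assms[of "- c / k"] by simp
qed

lemma psd_Im_qform: "psd A \<Longrightarrow> Im (qform A x) = 0"
  by (simp add: psd_def)

lemma psd_qform_nonneg: "psd A \<Longrightarrow> 0 \<le> Re (qform A x)"
  by (simp add: psd_def)

lemma psd_mult_eq_0_if_qform_eq_0:
  assumes "psd A" and "qform A v = 0"
  shows "A *v v = 0"
proof -
  have herm: "adjoint A = A"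
    using assms(1) by (simp add: psd_def)
  have "Re (cinner y (A *v v)) = 0" for y
  proof -
    have "0 \<le> t * (2 * Re (cinner y (A *v v))) + t^2 * Re (qform A y)" for t
      using psd_qform_nonneg[OF assms(1), of "v + complex_of_real t *s y"]
        hermitian_qform_add_real_scaled[OF herm] assms(2)
      by (simp add: algebra_simps)
    from linear_coeff_eq_0_if_quadratic_nonneg[OF this] show ?thesis by simp
  qed
  from this[of "A *v v"] show ?thesis
    by (simp add: cinner_self)
qed

lemma is_proj_hermitian: "is_proj P \<Longrightarrow> adjoint P = P"
  by (simp add: is_proj_def)

lemma is_proj_mult_idem: "is_proj P \<Longrightarrow> P *v (P *v x) = P *v x"
  by (simp add: is_proj_def matrix_vector_mul_assoc)

lemma qform_proj: "is_proj P \<Longrightarrow> qform P x = cinner (P *v x) (P *v x)"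
  by (metis cinner_hermitian is_proj_hermitian is_proj_mult_idem qform_eq_cinner)

lemma qform_proj_sandwich: "is_proj P \<Longrightarrow> qform (P ** A ** P) x = qform A (P *v x)"
  by (simp add: qform_eq_cinner cinner_hermitian is_proj_hermitian flip: matrix_vector_mul_assoc)

lemma is_proj_psd: "is_proj P \<Longrightarrow> psd P"
  by (simp add: psd_def is_proj_hermitian qform_proj cinner_self)

lemma is_proj_complement:
  assumes "is_proj P"
  shows "is_proj (mat 1 - P)"
proof -
  have "(mat 1 - P) ** (mat 1 - P) = mat 1 - P"
    using assms by (simp add: matrix_diff_ldistrib matrix_diff_rdistrib is_proj_def)
  moreover have "adjoint (mat 1 - P) = mat 1 - P"
    using assms by (simp add: adjoint_diff is_proj_hermitian)
  ultimately show ?thesis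
    by (simp add: is_proj_def)
qed

lemma diag_congruence_eq_qform: "(adjoint V ** A ** V)$i$i = qform A (column i V)"
proof -
  have "(adjoint V ** A ** V)$i$i = (\<Sum>l\<in>UNIV. \<Sum>k\<in>UNIV. cnj (V$k$i) * A$k$l * V$l$i)"
    by (simp add: matrix_matrix_mult_def adjoint_def sum_distrib_right)
  also have "\<dots> = (\<Sum>k\<in>UNIV. \<Sum>l\<in>UNIV. cnj (V$k$i) * A$k$l * V$l$i)"
    by (rule sum.swap)
  also have "\<dots> = qform A (column i V)"
    by (simp add: qform_def matrix_vector_mult_def column_def sum_distrib_left mult.assoc)
  finally show ?thesis .
qed

lemma trace_mult_proj_sandwich:
  assumes "is_proj P"
  shows "trace (A ** P) = trace (P ** A ** P)"
proof -
  have "trace (A ** P) = trace ((A ** P) ** P)"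
    using assms by (simp add: is_proj_def flip: matrix_mul_assoc)
  also have "\<dots> = trace (P ** (A ** P))"
    by (rule trace_mul_sym)
  also have "\<dots> = trace (P ** A ** P)"
    by (simp add: matrix_mul_assoc)
  finally show ?thesis .
qed

lemma trace_psd_mult_proj:
  assumes "is_proj P" and "psd A"
  shows "trace (A ** P) = complex_of_real (Re (trace (A ** P)))"
    and "0 \<le> Re (trace (A ** P))"
proof -
  have "trace (A ** P) = trace (adjoint P ** A ** P)"
    using trace_mult_proj_sandwich[OF assms(1)] is_proj_hermitian[OF assms(1)] by simp
  then have tr: "trace (A ** P) = (\<Sum>i\<in>UNIV. qform A (column i P))"
    by (simp add: trace_def diag_congruence_eq_qform)
  show "0 \<le> Re (trace (A ** P))"
    unfolding tr Re_sum using assms(2) by (simp add: psd_qform_nonneg sum_nonneg)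
  show "trace (A ** P) = complex_of_real (Re (trace (A ** P)))"
    unfolding tr using assms(2) by (simp add: complex_eq_iff Im_sum psd_def)
qed

lemma trace_mult_complement: "trace (A ** (mat 1 - T)) = trace A - trace (A ** (T::complex^'n^'n))"
  by (simp add: matrix_diff_ldistrib trace_sub)

section \<open>Spectral theorem for Hermitian matrices\<close>

definition cdiag :: "('n \<Rightarrow> complex) \<Rightarrow> complex^'n^'n" where
  "cdiag d = (\<chi> i j. if i = j then d i else 0)"

lemma cdiag_mult: "cdiag a ** cdiag b = cdiag (\<lambda>i. a i * b i)"
proof -
  have "(\<Sum>k\<in>UNIV. (if i = k then a i else 0) * (if k = j then b k else 0)) =
        (\<Sum>k\<in>UNIV. if k = i then a i * (if i = j then b i else 0) else 0)" for i j
    by (rule sum.cong) auto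
  then show ?thesis
    by (simp add: cdiag_def vec_eq_iff matrix_matrix_mult_def)
qed

lemma adjoint_cdiag: "adjoint (cdiag a) = cdiag (\<lambda>i. cnj (a i))"
  by (simp add: cdiag_def adjoint_def vec_eq_iff)

lemma trace_mult_cdiag: "trace (A ** cdiag c) = (\<Sum>i\<in>UNIV. A$i$i * c i)"
proof -
  have "(A ** cdiag c)$i$i = (\<Sum>k\<in>UNIV. if k = i then A$i$k * c k else 0)" for i
    by (simp add: matrix_matrix_mult_def cdiag_def if_distrib cong: if_cong)
  then show ?thesis
    by (simp add: trace_def)
qed

lemma exists_nonzero_orthogonal:
  fixes f :: "nat \<Rightarrow> complex^'n"
  assumes "k < CARD('n)"
  shows "\<exists>w. w \<noteq> 0 \<and> (\<forall>j<k. cinner (f j) w = 0)"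
proof -
  obtain h :: "nat \<Rightarrow> 'n" where h: "bij_betw h {0..<CARD('n)} UNIV"
    using ex_bij_betw_nat_finite[of "UNIV::'n set"] by auto
  define g where "g = inv_into {0..<CARD('n)} h"
  have gh: "g (h j) = j" if "j < CARD('n)" for j
    using h that unfolding g_def by (simp add: bij_betw_def inv_into_f_f)
  define B :: "complex^'n^'n" where "B = (\<chi> r s. if g r < k then cnj (f (g r) $ s) else 0)"
  have "\<exists>w. B *v w = 0 \<and> w \<noteq> 0"
  proof (rule ccontr)
    assume "\<not> ?thesis"
    then obtain C where "C ** B = mat 1"
      using matrix_left_invertible_ker by blast
    then have "B ** C = mat 1"
      using matrix_left_right_inverse by blast
    moreover have "(B ** C) $ h k $ h k = 0"
      using gh[OF assms] by (simp add: matrix_matrix_mult_def B_def)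
    ultimately show False
      by (simp add: mat_def)
  qed
  then obtain w where w: "B *v w = 0" "w \<noteq> 0"
    by blast
  have "(B *v w) $ h j = cinner (f j) w" if "j < k" for j
    using gh[of j] that assms by (simp add: matrix_vector_mult_def B_def cinner_def)
  with w show ?thesis
    by auto
qed

lemma rayleigh_quotient_attains_max:
  fixes A :: "complex^'n^'n"
  assumes "closed V" and scale: "\<And>c z. z \<in> V \<Longrightarrow> c *s z \<in> V" and "w \<in> V" "w \<noteq> 0"
  shows "\<exists>x\<in>V. cinner x x = 1 \<and> (\<forall>z\<in>V. Re (qform A z) \<le> Re (qform A x) * Re (cinner z z))"
proof -
  define K where "K = sphere 0 1 \<inter> V"
  have "compact K"
    unfolding K_def using \<open>closed V\<close> by (intro compact_Int_closed compact_sphere)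
  moreover have "K \<noteq> {}"
  proof -
    obtain c where "cinner (c *s w) (c *s w) = 1"
      using unit_rescaling[OF \<open>w \<noteq> 0\<close>] by blast
    then show ?thesis
      using scale[OF \<open>w \<in> V\<close>] by (auto simp: K_def cinner_self_eq_1)
  qed
  moreover have "continuous_on K (\<lambda>x. Re (qform A x))"
    unfolding qform_def matrix_vector_mult_def by (intro continuous_intros)
  ultimately obtain x where "x \<in> K" and xmax: "\<And>y. y \<in> K \<Longrightarrow> Re (qform A y) \<le> Re (qform A x)"
    by (meson continuous_attains_sup)
  have "Re (qform A z) \<le> Re (qform A x) * Re (cinner z z)" if "z \<in> V" for z
  proof (cases "z = 0")
    case True
    then show ?thesis by (simp add: qform_def)
  next
    case False
    then obtain c where c: "cinner (c *s z) (c *s z) = 1"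
      "\<And>A. qform A (c *s z) = qform A z / complex_of_real ((norm z)^2)"
      using unit_rescaling by blast
    then have "Re (qform A (c *s z)) = Re (qform A z) / (norm z)^2"
      by (simp only: Re_divide_of_real)
    moreover have "Re (qform A (c *s z)) \<le> Re (qform A x)"
      using xmax[of "c *s z"] scale[OF that] c(1) by (simp add: K_def cinner_self_eq_1)
    ultimately have "Re (qform A z) / (norm z)^2 \<le> Re (qform A x)"
      by simp
    then show ?thesis
      using False by (simp add: cinner_self divide_le_eq)
  qed
  with \<open>x \<in> K\<close> show ?thesis
    by (auto simp: K_def cinner_self_eq_1)
qed

lemma rayleigh_maximizer_is_eigenvector:
  fixes A :: "complex^'n^'n"
  assumes herm: "adjoint A = A"
    and add: "\<And>y z. y \<in> V \<Longrightarrow> z \<in> V \<Longrightarrow> y + z \<in> V"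
    and scale: "\<And>c z. z \<in> V \<Longrightarrow> c *s z \<in> V"
    and x: "x \<in> V" "A *v x \<in> V" "cinner x x = 1"
    and max: "\<And>z. z \<in> V \<Longrightarrow> Re (qform A z) \<le> Re (qform A x) * Re (cinner z z)"
  shows "A *v x = complex_of_real (Re (qform A x)) *s x"
proof -
  define M where "M = Re (qform A x)"
  define v where "v = A *v x - complex_of_real M *s x"
  have "v \<in> V"
    using add[OF x(2) scale[OF x(1), of "- complex_of_real M"]] by (simp add: v_def)
  have "Re (cinner y v) = 0" if "y \<in> V" for y
  proof -
    have "0 \<le> t * (2 * M * Re (cinner y x) - 2 * Re (cinner y (A *v x)))
              + t^2 * (M * Re (cinner y y) - Re (qform A y))" for t
    proof -
      let ?z = "x + complex_of_real t *s y"
      have "Re (qform A ?z) = M + 2 * t * Re (cinner y (A *v x)) + t^2 * Re (qform A y)"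
        using hermitian_qform_add_real_scaled[OF herm, of x t y] by (simp add: M_def)
      moreover have "Re (cinner ?z ?z) = 1 + 2 * t * Re (cinner y x) + t^2 * Re (cinner y y)"
        using hermitian_qform_add_real_scaled[of "mat 1" x t y] x(3) by (simp add: qform_eq_cinner)
      moreover have "Re (qform A ?z) \<le> M * Re (cinner ?z ?z)"
        using max[OF add[OF x(1) scale[OF that]]] by (simp add: M_def)
      ultimately show ?thesis
        by (simp add: qform_eq_cinner algebra_simps)
    qed
    from linear_coeff_eq_0_if_quadratic_nonneg[OF this] show ?thesis
      by (simp add: v_def cinner_diff_right cinner_scale_right)
  qed
  from this[OF \<open>v \<in> V\<close>] have "v = 0"
    by (simp add: cinner_self)
  then show ?thesis
    by (simp add: v_def M_def)
qed

lemma hermitian_eigenvector_orthogonal: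
  fixes A :: "complex^'n^'n" and f :: "nat \<Rightarrow> complex^'n"
  assumes herm: "adjoint A = A" and "k < CARD('n)"
    and eig: "\<And>j. j < k \<Longrightarrow> A *v f j = complex_of_real (\<mu> j) *s f j"
  shows "\<exists>x M. cinner x x = 1 \<and> (\<forall>j<k. cinner (f j) x = 0) \<and> A *v x = complex_of_real M *s x"
proof -
  define V where "V = (\<Inter>j\<in>{..<k}. {z. cinner (f j) z = 0})"
  have V_iff: "z \<in> V \<longleftrightarrow> (\<forall>j<k. cinner (f j) z = 0)" for z
    unfolding V_def by blast
  have "continuous_on UNIV (cinner v)" for v :: "complex^'n"
    unfolding cinner_def by (intro continuous_intros)
  then have "closed V"
    unfolding V_def by (intro closed_INT ballI closed_Collect_eq continuous_on_const)
  have add: "y + z \<in> V" if "y \<in> V" "z \<in> V" for y z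
    using that by (simp add: V_iff cinner_add_right)
  have scale: "c *s z \<in> V" if "z \<in> V" for c z
    using that by (simp add: V_iff cinner_scale_right)
  obtain w where "w \<noteq> 0" "\<forall>j<k. cinner (f j) w = 0"
    using exists_nonzero_orthogonal[OF \<open>k < CARD('n)\<close>, of f] by blast
  then obtain x where x: "x \<in> V" "cinner x x = 1"
    and max: "\<forall>z\<in>V. Re (qform A z) \<le> Re (qform A x) * Re (cinner z z)"
    using rayleigh_quotient_attains_max[OF \<open>closed V\<close> scale, of w A] by (auto simp: V_iff)
  have "cinner (f j) (A *v x) = 0" if "j < k" for j
    using x(1) that by (simp add: cinner_hermitian[OF herm] eig cinner_scale_left V_iff)
  then have "A *v x \<in> V"
    by (simp add: V_iff)
  then have "A *v x = complex_of_real (Re (qform A x)) *s x"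
    using rayleigh_maximizer_is_eigenvector[OF herm add scale x(1) _ x(2)] max by blast
  with x show ?thesis
    by (auto simp: V_iff)
qed

lemma hermitian_orthonormal_eigenvectors:
  fixes A :: "complex^'n^'n"
  assumes herm: "adjoint A = A" and "k \<le> CARD('n)"
  shows "\<exists>f \<mu>. (\<forall>j<k. \<forall>l<k. cinner (f j) (f l) = (if j = l then 1 else 0))
            \<and> (\<forall>j<k. A *v f j = complex_of_real (\<mu> j) *s f j)"
  using \<open>k \<le> CARD('n)\<close>
proof (induction k)
  case 0
  show ?case by simp
next
  case (Suc k)
  then obtain f \<mu> where orth: "\<forall>j<k. \<forall>l<k. cinner (f j) (f l) = (if j = l then 1 else 0)"
      and eig: "\<forall>j<k. A *v f j = complex_of_real (\<mu> j) *s f j"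
    by auto
  obtain x M where x: "cinner x x = 1" "\<forall>j<k. cinner (f j) x = 0" "A *v x = complex_of_real M *s x"
    using hermitian_eigenvector_orthogonal[OF herm, of k f \<mu>] eig Suc.prems by auto
  have "cinner ((f(k := x)) j) ((f(k := x)) l) = (if j = l then 1 else 0)"
    if "j < Suc k" "l < Suc k" for j l
  proof (cases "j = k"; cases "l = k")
    assume "j = k" "l \<noteq> k"
    then show ?thesis
      using x(2) that cnj_cinner[of "f l" x] by simp
  next
    assume "j \<noteq> k" "l = k"
    then show ?thesis
      using x(2) that by simp
  next
    assume "j \<noteq> k" "l \<noteq> k"
    then show ?thesis
      using orth that by simp
  qed (simp add: x(1))
  then have "\<forall>j<Suc k. \<forall>l<Suc k. cinner ((f(k := x)) j) ((f(k := x)) l) = (if j = l then 1 else 0)"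
    by blast
  moreover have "\<forall>j<Suc k. A *v (f(k := x)) j = complex_of_real ((\<mu>(k := M)) j) *s (f(k := x)) j"
    using eig x(3) by (auto simp: less_Suc_eq)
  ultimately show ?case
    by blast
qed

lemma hermitian_diagonalization:
  fixes A :: "complex^'n^'n"
  assumes herm: "adjoint A = A"
  obtains U d where "adjoint U ** U = mat 1" and "U ** adjoint U = mat 1"
    and "A = U ** cdiag (\<lambda>i. complex_of_real (d i)) ** adjoint U"
proof -
  obtain f \<mu> where orth: "\<forall>j<CARD('n). \<forall>l<CARD('n). cinner (f j) (f l) = (if j = l then 1 else 0)"
      and eig: "\<forall>j<CARD('n). A *v f j = complex_of_real (\<mu> j) *s f j"
    using hermitian_orthonormal_eigenvectors[OF herm order.refl] by blast
  obtain h :: "nat \<Rightarrow> 'n" where "bij_betw h {0..<CARD('n)} UNIV"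
    using ex_bij_betw_nat_finite[of "UNIV::'n set"] by auto
  then have g: "bij_betw (inv_into {0..<CARD('n)} h) UNIV {0..<CARD('n)}"
    by (rule bij_betw_inv_into)
  define g where "g = inv_into {0..<CARD('n)} h"
  have glt: "g s < CARD('n)" and ginj: "g s = g s' \<longleftrightarrow> s = s'" for s s'
    using g by (auto simp: g_def bij_betw_def inj_on_def)
  define U :: "complex^'n^'n" where "U = (\<chi> r s. f (g s) $ r)"
  define D where "D = cdiag (\<lambda>s. complex_of_real (\<mu> (g s)))"
  have "(adjoint U ** U) $ s $ s' = cinner (f (g s)) (f (g s'))" for s s'
    by (simp add: U_def adjoint_def matrix_matrix_mult_def cinner_def)
  then have UU: "adjoint U ** U = mat 1"
    using orth glt ginj by (simp add: vec_eq_iff mat_def)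
  then have UU': "U ** adjoint U = mat 1"
    using matrix_left_right_inverse by blast
  have "(A ** U) $ r $ s = (A *v f (g s)) $ r" for r s
    by (simp add: U_def matrix_matrix_mult_def matrix_vector_mult_def)
  moreover have "(U ** D) $ r $ s = (complex_of_real (\<mu> (g s)) *s f (g s)) $ r" for r s
    by (simp add: U_def D_def matrix_matrix_mult_def cdiag_def if_distrib mult.commute cong: if_cong)
  ultimately have AU: "A ** U = U ** D"
    using eig glt by (simp add: vec_eq_iff)
  have "A = A ** (U ** adjoint U)"
    using UU' by simp
  also have "\<dots> = U ** D ** adjoint U"
    by (simp add: matrix_mul_assoc AU)
  finally show ?thesis
    using that[of U "\<lambda>s. \<mu> (g s)"] UU UU' by (simp add: D_def)
qed

section \<open>Weighted geometric means\<close>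

definition geo_mean :: "real \<Rightarrow> real \<Rightarrow> real \<Rightarrow> real" where
  "geo_mean \<alpha> a b = a powr \<alpha> * b powr (1 - \<alpha>)"

lemma geo_mean_nonneg: "0 \<le> geo_mean \<alpha> a b"
  by (simp add: geo_mean_def)

lemma geo_mean_0_left [simp]: "geo_mean \<alpha> 0 b = 0"
  and geo_mean_0_right [simp]: "geo_mean \<alpha> a 0 = 0"
  by (simp_all add: geo_mean_def)

lemma geo_mean_le_arith_mean:
  assumes "0 < \<alpha>" "\<alpha> < 1" "0 \<le> x" "0 \<le> y"
  shows "geo_mean \<alpha> x y \<le> \<alpha> * x + (1 - \<alpha>) * y"
  using Youngs_inequality_0[of \<alpha> "1 - \<alpha>" x y] assms by (cases "x = 0 \<or> y = 0") (auto simp: geo_mean_def)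

lemma geo_mean_less_arith_mean:
  assumes \<alpha>: "0 < \<alpha>" "\<alpha> < 1" and "0 \<le> x" "0 \<le> y" "x \<noteq> y"
  shows "geo_mean \<alpha> x y < \<alpha> * x + (1 - \<alpha>) * y"
proof (cases "x = 0 \<or> y = 0")
  case True
  then show ?thesis using assms by auto
next
  case False
  define s where "s = sqrt x"
  define u where "u = sqrt y"
  have "s > 0" "u > 0" and x: "x = s * s" and y: "y = u * u"
    using False assms by (auto simp: s_def u_def)
  then have "0 < (s - u)^2"
    using \<open>x \<noteq> y\<close> by auto
  \<comment> \<open>Apply the weak inequality to the square roots and square it; the loss is \<open>\<alpha> (1 - \<alpha>) (s - u)\<^sup>2\<close>.\<close>
  have "geo_mean \<alpha> x y = geo_mean \<alpha> s u * geo_mean \<alpha> s u"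
    unfolding x y geo_mean_def using \<open>s > 0\<close> \<open>u > 0\<close> by (simp add: powr_mult)
  also have "\<dots> \<le> (\<alpha> * s + (1 - \<alpha>) * u) * (\<alpha> * s + (1 - \<alpha>) * u)"
    using geo_mean_le_arith_mean[OF \<alpha>, of s u] \<open>s > 0\<close> \<open>u > 0\<close> geo_mean_nonneg[of \<alpha> s u]
    by (intro mult_mono) auto
  also have "\<dots> = \<alpha> * x + (1 - \<alpha>) * y - \<alpha> * (1 - \<alpha>) * (s - u)^2"
    unfolding x y by (simp add: algebra_simps power2_eq_square)
  also have "\<dots> < \<alpha> * x + (1 - \<alpha>) * y"
    using \<alpha> \<open>0 < (s - u)^2\<close> by simp
  finally show ?thesis .
qed

lemma geo_mean_mult:
  assumes "0 \<le> A" "0 \<le> B" "0 \<le> a" "0 \<le> b"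
  shows "geo_mean \<alpha> (A * a) (B * b) = geo_mean \<alpha> A B * geo_mean \<alpha> a b"
  using assms by (simp add: geo_mean_def powr_mult mult_ac)

lemma geo_mean_scale:
  assumes "0 \<le> c" "0 \<le> a" "0 \<le> b"
  shows "geo_mean \<alpha> (c * a) (c * b) = c * geo_mean \<alpha> a b"
proof -
  have "geo_mean \<alpha> c c = c"
    using assms(1) by (cases "c = 0") (simp_all add: geo_mean_def flip: powr_add)
  then show ?thesis
    using geo_mean_mult[of c c a b \<alpha>] assms by simp
qed

lemma geo_mean_sum_le_1:
  assumes \<alpha>: "0 < \<alpha>" "\<alpha> < 1" and "0 \<le> a1" "0 \<le> a2" "0 \<le> b1" "0 \<le> b2"
    and "a1 + a2 = 1" "b1 + b2 = 1"
  shows "geo_mean \<alpha> a1 b1 + geo_mean \<alpha> a2 b2 \<le> 1"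
    and "a1 \<noteq> b1 \<Longrightarrow> geo_mean \<alpha> a1 b1 + geo_mean \<alpha> a2 b2 < 1"
proof -
  have one: "\<alpha> * a1 + (1 - \<alpha>) * b1 + (\<alpha> * a2 + (1 - \<alpha>) * b2) = 1"
    using assms(7,8) by (simp add: algebra_simps flip: distrib_left)
  show "geo_mean \<alpha> a1 b1 + geo_mean \<alpha> a2 b2 \<le> 1"
    using geo_mean_le_arith_mean[OF \<alpha>, of a1 b1] geo_mean_le_arith_mean[OF \<alpha>, of a2 b2]
      one assms(3-6) by linarith
  show "geo_mean \<alpha> a1 b1 + geo_mean \<alpha> a2 b2 < 1" if "a1 \<noteq> b1"
    using geo_mean_less_arith_mean[OF \<alpha> assms(3,5) that] geo_mean_le_arith_mean[OF \<alpha> assms(4,6)]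
      one by linarith
qed

lemma geo_mean_superadditive:
  assumes \<alpha>: "0 < \<alpha>" "\<alpha> < 1" and nn: "0 \<le> a1" "0 \<le> a2" "0 \<le> b1" "0 \<le> b2"
  shows "geo_mean \<alpha> a1 b1 + geo_mean \<alpha> a2 b2 \<le> geo_mean \<alpha> (a1 + a2) (b1 + b2)"
    and "a1 * (b1 + b2) \<noteq> b1 * (a1 + a2) \<Longrightarrow>
         geo_mean \<alpha> a1 b1 + geo_mean \<alpha> a2 b2 < geo_mean \<alpha> (a1 + a2) (b1 + b2)"
proof -
  define A B where "A = a1 + a2" and "B = b1 + b2"
  have "geo_mean \<alpha> a1 b1 + geo_mean \<alpha> a2 b2 \<le> geo_mean \<alpha> A B \<and>
      (a1 * B \<noteq> b1 * A \<longrightarrow> geo_mean \<alpha> a1 b1 + geo_mean \<alpha> a2 b2 < geo_mean \<alpha> A B)"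
  proof (cases "A = 0 \<or> B = 0")
    case True
    then have "(a1 = 0 \<and> a2 = 0) \<or> (b1 = 0 \<and> b2 = 0)"
      using nn by (auto simp: A_def B_def)
    then show ?thesis
      using nn by (auto simp: A_def B_def)
  next
    case False
    then have "A > 0" "B > 0"
      using nn by (auto simp: A_def B_def)
    let ?S = "geo_mean \<alpha> (a1 / A) (b1 / B) + geo_mean \<alpha> (a2 / A) (b2 / B)"
    have "geo_mean \<alpha> a b = geo_mean \<alpha> A B * geo_mean \<alpha> (a / A) (b / B)"
      if "0 \<le> a" "0 \<le> b" for a b
      using geo_mean_mult[of A B "a / A" "b / B" \<alpha>] that \<open>A > 0\<close> \<open>B > 0\<close> by simp
    then have "geo_mean \<alpha> a1 b1 + geo_mean \<alpha> a2 b2 = geo_mean \<alpha> A B * ?S"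
      using nn by (simp add: distrib_left)
    moreover have "?S \<le> 1" and "a1 * B \<noteq> b1 * A \<Longrightarrow> ?S < 1"
    proof -
      have sums: "a1 / A + a2 / A = 1" "b1 / B + b2 / B = 1"
        using \<open>A > 0\<close> \<open>B > 0\<close> by (simp_all add: A_def B_def flip: add_divide_distrib)
      have nn': "0 \<le> a1 / A" "0 \<le> a2 / A" "0 \<le> b1 / B" "0 \<le> b2 / B"
        using nn \<open>A > 0\<close> \<open>B > 0\<close> by simp_all
      show "?S \<le> 1"
        by (rule geo_mean_sum_le_1(1)[OF \<alpha> nn' sums])
      show "?S < 1" if "a1 * B \<noteq> b1 * A"
      proof (rule geo_mean_sum_le_1(2)[OF \<alpha> nn' sums])
        show "a1 / A \<noteq> b1 / B"
          using that \<open>A > 0\<close> \<open>B > 0\<close> by (simp add: field_simps)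
      qed
    qed
    moreover have "geo_mean \<alpha> A B > 0"
      using \<open>A > 0\<close> \<open>B > 0\<close> by (simp add: geo_mean_def)
    ultimately show ?thesis
      by (auto simp: mult_le_cancel_left1 mult_less_cancel_left1)
  qed
  then show "geo_mean \<alpha> a1 b1 + geo_mean \<alpha> a2 b2 \<le> geo_mean \<alpha> (a1 + a2) (b1 + b2)"
    and "a1 * (b1 + b2) \<noteq> b1 * (a1 + a2) \<Longrightarrow>
         geo_mean \<alpha> a1 b1 + geo_mean \<alpha> a2 b2 < geo_mean \<alpha> (a1 + a2) (b1 + b2)"
    by (simp_all add: A_def B_def)
qed

lemma geo_mean_concave:
  assumes \<alpha>: "0 < \<alpha>" "\<alpha> < 1" and "0 \<le> a" "0 \<le> b" "0 \<le> a'" "0 \<le> b'" "\<theta> \<in> {0..1}"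
  shows "(1 - \<theta>) * geo_mean \<alpha> a b + \<theta> * geo_mean \<alpha> a' b'
           \<le> geo_mean \<alpha> ((1 - \<theta>) * a + \<theta> * a') ((1 - \<theta>) * b + \<theta> * b')"
  using geo_mean_superadditive(1)[OF \<alpha>, of "(1 - \<theta>) * a" "\<theta> * a'" "(1 - \<theta>) * b" "\<theta> * b'"]
    geo_mean_scale[of "1 - \<theta>" a b \<alpha>] geo_mean_scale[of \<theta> a' b' \<alpha>] assms
  by simp

definition binary_Q :: "real \<Rightarrow> real \<Rightarrow> real \<Rightarrow> real" where
  "binary_Q \<alpha> a b = geo_mean \<alpha> a b + geo_mean \<alpha> (1 - a) (1 - b)"

lemma binary_Q_nonneg: "0 \<le> binary_Q \<alpha> a b"
  by (simp add: binary_Q_def geo_mean_nonneg)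

lemma binary_Q_less_1:
  assumes "0 < \<alpha>" "\<alpha> < 1" "0 \<le> a" "a \<le> 1" "0 \<le> b" "b \<le> 1" "a \<noteq> b"
  shows "binary_Q \<alpha> a b < 1"
proof -
  have "geo_mean \<alpha> 1 1 = 1"
    by (simp add: geo_mean_def)
  then show ?thesis
    using geo_mean_superadditive(2)[of \<alpha> a "1 - a" b "1 - b"] assms
    by (simp add: binary_Q_def algebra_simps)
qed

lemma binary_Q_min_le_convex_comb:
  assumes \<alpha>: "0 < \<alpha>" "\<alpha> < 1"
    and "a0 \<in> {0..1}" "b0 \<in> {0..1}" "a1 \<in> {0..1}" "b1 \<in> {0..1}" "\<theta> \<in> {0..1}"
  shows "min (binary_Q \<alpha> a0 b0) (binary_Q \<alpha> a1 b1)
           \<le> binary_Q \<alpha> ((1 - \<theta>) * a0 + \<theta> * a1) ((1 - \<theta>) * b0 + \<theta> * b1)"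
proof -
  have "(1 - \<theta>) * binary_Q \<alpha> a0 b0 + \<theta> * binary_Q \<alpha> a1 b1
      \<le> binary_Q \<alpha> ((1 - \<theta>) * a0 + \<theta> * a1) ((1 - \<theta>) * b0 + \<theta> * b1)"
    using geo_mean_concave[OF \<alpha>, of a0 b0 a1 b1 \<theta>]
      geo_mean_concave[OF \<alpha>, of "1 - a0" "1 - b0" "1 - a1" "1 - b1" \<theta>] assms
    by (simp add: binary_Q_def algebra_simps)
  moreover have "min (binary_Q \<alpha> a0 b0) (binary_Q \<alpha> a1 b1)
      \<le> (1 - \<theta>) * binary_Q \<alpha> a0 b0 + \<theta> * binary_Q \<alpha> a1 b1"
  proof -
    have "(1 - \<theta>) * min (binary_Q \<alpha> a0 b0) (binary_Q \<alpha> a1 b1) \<le> (1 - \<theta>) * binary_Q \<alpha> a0 b0"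
      "\<theta> * min (binary_Q \<alpha> a0 b0) (binary_Q \<alpha> a1 b1) \<le> \<theta> * binary_Q \<alpha> a1 b1"
      using assms(7) by (simp_all add: mult_left_mono)
    then show ?thesis
      by (simp add: algebra_simps)
  qed
  ultimately show ?thesis
    by linarith
qed

section \<open>Reduction of tests to projections\<close>

definition renyi_of_Q :: "real \<Rightarrow> real \<Rightarrow> ereal" where
  "renyi_of_Q \<alpha> s = (if s = 0 then \<infinity> else ereal (ln s / (\<alpha> - 1)))"

lemma renyi_eq_renyi_of_Q: "renyi \<alpha> X p q = renyi_of_Q \<alpha> (\<Sum>x\<in>X. geo_mean \<alpha> (p x) (q x))"
  by (simp add: renyi_def renyi_of_Q_def geo_mean_def Let_def)

lemma renyi_of_Q_antimono:
  assumes "\<alpha> < 1" "0 \<le> s1" "s1 \<le> s2"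
  shows "renyi_of_Q \<alpha> s2 \<le> renyi_of_Q \<alpha> s1"
proof (cases "s1 = 0")
  case False
  then have "ln s2 / (\<alpha> - 1) \<le> ln s1 / (\<alpha> - 1)"
    using assms by (simp add: divide_right_mono_neg)
  then show ?thesis
    using False assms by (simp add: renyi_of_Q_def)
qed (simp add: renyi_of_Q_def)

lemma renyi_of_Q_strict_antimono:
  assumes "\<alpha> < 1" "0 \<le> s1" "s1 < s2"
  shows "renyi_of_Q \<alpha> s2 < renyi_of_Q \<alpha> s1"
proof (cases "s1 = 0")
  case False
  then have "ln s2 / (\<alpha> - 1) < ln s1 / (\<alpha> - 1)"
    using assms by (simp add: divide_strict_right_mono_neg)
  then show ?thesis
    using False assms by (simp add: renyi_of_Q_def)
qed (use assms in \<open>simp add: renyi_of_Q_def\<close>)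

abbreviation test_renyi :: "real \<Rightarrow> complex^'n^'n \<Rightarrow> complex^'n^'n \<Rightarrow> complex^'n^'n \<Rightarrow> ereal"
  where "test_renyi \<alpha> \<rho> \<sigma> T \<equiv> renyi \<alpha> UNIV (test_map T \<rho>) (test_map T \<sigma>)"

lemma test_renyi_eq:
  assumes "density \<rho>" "density \<sigma>"
  shows "test_renyi \<alpha> \<rho> \<sigma> T
           = renyi_of_Q \<alpha> (binary_Q \<alpha> (Re (trace (\<rho> ** T))) (Re (trace (\<sigma> ** T))))"
  using assms
  by (simp add: renyi_eq_renyi_of_Q UNIV_bool binary_Q_def test_map_def trace_mult_complement
      density_def add.commute)

lemma test_renyi_complement:
  assumes "density \<rho>" "density \<sigma>"
  shows "test_renyi \<alpha> \<rho> \<sigma> (mat 1 - T) = test_renyi \<alpha> \<rho> \<sigma> T"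
  using assms
  by (simp add: test_renyi_eq binary_Q_def trace_mult_complement density_def add.commute)

lemma unitary_conj_cdiag_eigenvalue:
  assumes "adjoint U ** U = mat 1" "A = U ** cdiag (\<lambda>i. complex_of_real (d i)) ** adjoint U"
  shows "qform A (column i U) = complex_of_real (d i)"
proof -
  have "adjoint U ** A ** U = (adjoint U ** U) ** cdiag (\<lambda>i. complex_of_real (d i)) ** (adjoint U ** U)"
    using assms(2) by (simp add: matrix_mul_assoc)
  then show ?thesis
    using assms(1) by (simp flip: diag_congruence_eq_qform) (simp add: cdiag_def)
qed

lemma test_eigenvalues:
  assumes "psd T" "loewner_le T (mat 1)"
    and U: "adjoint U ** U = mat 1" "U ** adjoint U = mat 1"
    and T: "T = U ** cdiag (\<lambda>i. complex_of_real (d i)) ** adjoint U"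
  shows "d i \<in> {0..1}"
proof -
  have "mat 1 - T = U ** (mat 1 - cdiag (\<lambda>i. complex_of_real (d i))) ** adjoint U"
    using U(2) T by (simp add: matrix_diff_ldistrib matrix_diff_rdistrib)
  also have "mat 1 - cdiag (\<lambda>i. complex_of_real (d i)) = cdiag (\<lambda>i. complex_of_real (1 - d i))"
    by (simp add: cdiag_def mat_def vec_eq_iff)
  finally have "qform (mat 1 - T) (column i U) = complex_of_real (1 - d i)"
    by (rule unitary_conj_cdiag_eigenvalue[OF U(1)])
  moreover have "qform T (column i U) = complex_of_real (d i)"
    using unitary_conj_cdiag_eigenvalue[OF U(1) T] .
  ultimately show ?thesis
    using psd_qform_nonneg[OF assms(1), of "column i U"]
      psd_qform_nonneg[OF assms(2)[unfolded loewner_le_def], of "column i U"]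
    by simp
qed

lemma is_proj_unitary_conj_cdiag:
  assumes U: "adjoint U ** U = mat 1" and e: "\<And>i. e i = 0 \<or> e i = 1"
  shows "is_proj (U ** cdiag (\<lambda>i. complex_of_real (e i)) ** adjoint U)"
proof -
  let ?E = "cdiag (\<lambda>i. complex_of_real (e i))"
  have "(\<lambda>i. complex_of_real (e i) * complex_of_real (e i)) = (\<lambda>i. complex_of_real (e i))"
    by (rule ext) (use e in auto)
  then have "?E ** ?E = ?E"
    by (simp only: cdiag_mult)
  moreover have "(U ** ?E ** adjoint U) ** (U ** ?E ** adjoint U)
      = U ** (?E ** (adjoint U ** U) ** ?E) ** adjoint U"
    by (simp add: matrix_mul_assoc)
  ultimately have "(U ** ?E ** adjoint U) ** (U ** ?E ** adjoint U) = U ** ?E ** adjoint U"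
    by (simp add: U)
  moreover have "adjoint (U ** ?E ** adjoint U) = U ** ?E ** adjoint U"
    by (simp add: adjoint_mult adjoint_cdiag matrix_mul_assoc)
  ultimately show ?thesis
    by (simp add: is_proj_def)
qed

lemma re_trace_mult_unitary_conj_cdiag:
  "Re (trace (A ** (U ** cdiag (\<lambda>i. complex_of_real (c i)) ** adjoint U)))
     = (\<Sum>i\<in>UNIV. c i * Re ((adjoint U ** A ** U)$i$i))"
proof -
  have "trace (A ** (U ** cdiag (\<lambda>i. complex_of_real (c i)) ** adjoint U))
      = trace ((A ** (U ** cdiag (\<lambda>i. complex_of_real (c i)))) ** adjoint U)"
    by (simp add: matrix_mul_assoc)
  also have "\<dots> = trace (adjoint U ** (A ** (U ** cdiag (\<lambda>i. complex_of_real (c i)))))"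
    by (rule trace_mul_sym)
  finally show ?thesis
    by (simp add: matrix_mul_assoc trace_mult_cdiag Re_sum mult.commute)
qed

lemma density_unitary_conj_diag:
  assumes "density X" "U ** adjoint U = mat 1"
  shows "0 \<le> Re ((adjoint U ** X ** U)$i$i)" and "(\<Sum>i\<in>UNIV. Re ((adjoint U ** X ** U)$i$i)) = 1"
proof -
  show "0 \<le> Re ((adjoint U ** X ** U)$i$i)"
    using assms(1) by (simp add: diag_congruence_eq_qform density_def psd_qform_nonneg)
  have "trace (adjoint U ** X ** U) = trace (U ** (adjoint U ** X))"
    by (rule trace_mul_sym)
  also have "\<dots> = 1"
    using assms by (simp add: matrix_mul_assoc density_def)
  finally show "(\<Sum>i\<in>UNIV. Re ((adjoint U ** X ** U)$i$i)) = 1"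
    by (simp add: trace_def flip: Re_sum)
qed

lemma min_on_cube_at_vertex:
  fixes G :: "('n::finite \<Rightarrow> real) \<Rightarrow> real"
  assumes step: "\<And>l j. \<forall>i. l i \<in> {0..1} \<Longrightarrow> min (G (l(j := 0))) (G (l(j := 1))) \<le> G l"
    and "\<forall>i. l i \<in> {0..1}"
  shows "\<exists>e. (\<forall>i. e i = 0 \<or> e i = 1) \<and> G e \<le> G l"
proof -
  have "\<exists>e. (\<forall>i. e i = 0 \<or> e i = 1) \<and> G e \<le> G l"
    if "finite J" "\<forall>i. l i \<in> {0..1}" "\<forall>i. i \<notin> J \<longrightarrow> l i = 0 \<or> l i = 1" for J l
    using that
  proof (induction J arbitrary: l rule: finite_induct)
    case empty
    then show ?case by auto
  next
    case (insert j J)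
    have upd: "\<forall>i. (l(j := c)) i \<in> {0..1}" "\<forall>i. i \<notin> J \<longrightarrow> (l(j := c)) i = 0 \<or> (l(j := c)) i = 1"
      if "c = 0 \<or> c = 1" for c
      using insert.prems that by auto
    obtain e0 where e0: "\<forall>i. e0 i = 0 \<or> e0 i = 1" "G e0 \<le> G (l(j := 0))"
      using insert.IH[OF upd[of 0]] by blast
    obtain e1 where e1: "\<forall>i. e1 i = 0 \<or> e1 i = 1" "G e1 \<le> G (l(j := 1))"
      using insert.IH[OF upd[of 1]] by blast
    have "min (G (l(j := 0))) (G (l(j := 1))) \<le> G l"
      using step insert.prems(1) by blast
    then show ?case
      using e0 e1 by (metis min_le_iff_disj order_trans)
  qed
  from this[of UNIV] show ?thesis
    using assms(2) by simp
qed

lemma sum_fun_upd_weight: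
  fixes s :: "'n::finite \<Rightarrow> real"
  shows "(\<Sum>i\<in>UNIV. (l(j := c)) i * s i) = (\<Sum>i\<in>UNIV. l i * s i) + (c - l j) * s j"
proof -
  have "(\<Sum>i\<in>UNIV. (l(j := c)) i * s i) = (\<Sum>i\<in>UNIV. l i * s i + (if i = j then (c - l j) * s j else 0))"
    by (intro sum.cong) (auto simp: algebra_simps)
  then show ?thesis
    by (simp add: sum.distrib)
qed

lemma convex_weighted_sum_unit_interval:
  fixes s :: "'n::finite \<Rightarrow> real"
  assumes "\<forall>i. l i \<in> {0..1}" "\<And>i. 0 \<le> s i" "(\<Sum>i\<in>UNIV. s i) = 1"
  shows "(\<Sum>i\<in>UNIV. l i * s i) \<in> {0..1}"
proof -
  have "0 \<le> l i * s i" "l i * s i \<le> s i" for i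
    using assms(1) assms(2)[of i] by (simp_all add: mult_left_le_one_le)
  then have "0 \<le> (\<Sum>i\<in>UNIV. l i * s i)" "(\<Sum>i\<in>UNIV. l i * s i) \<le> (\<Sum>i\<in>UNIV. s i)"
    by (simp_all add: sum_nonneg sum_mono)
  with assms(3) show ?thesis
    by simp
qed

lemma binary_Q_weighted_min_at_vertex:
  fixes r t :: "'n::finite \<Rightarrow> real"
  assumes \<alpha>: "0 < \<alpha>" "\<alpha> < 1"
    and r: "\<And>i. 0 \<le> r i" "(\<Sum>i\<in>UNIV. r i) = 1" and t: "\<And>i. 0 \<le> t i" "(\<Sum>i\<in>UNIV. t i) = 1"
    and "\<forall>i. l i \<in> {0..1}"
  shows "\<exists>e. (\<forall>i. e i = 0 \<or> e i = 1) \<and>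
           binary_Q \<alpha> (\<Sum>i\<in>UNIV. e i * r i) (\<Sum>i\<in>UNIV. e i * t i)
             \<le> binary_Q \<alpha> (\<Sum>i\<in>UNIV. l i * r i) (\<Sum>i\<in>UNIV. l i * t i)"
proof (rule min_on_cube_at_vertex[OF _ \<open>\<forall>i. l i \<in> {0..1}\<close>])
  fix l :: "'n \<Rightarrow> real" and j
  assume l: "\<forall>i. l i \<in> {0..1}"
  have comb: "(\<Sum>i\<in>UNIV. l i * s i)
      = (1 - l j) * (\<Sum>i\<in>UNIV. (l(j := 0)) i * s i) + l j * (\<Sum>i\<in>UNIV. (l(j := 1)) i * s i)" for s
    unfolding sum_fun_upd_weight by (simp add: algebra_simps)
  have "\<forall>i. (l(j := c)) i \<in> {0..1}" if "c \<in> {0..1}" for c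
    using l that by simp
  then have "(\<Sum>i\<in>UNIV. (l(j := c)) i * r i) \<in> {0..1}" "(\<Sum>i\<in>UNIV. (l(j := c)) i * t i) \<in> {0..1}"
    if "c \<in> {0..1}" for c
    using that r t by (blast intro: convex_weighted_sum_unit_interval)+
  then show "min (binary_Q \<alpha> (\<Sum>i\<in>UNIV. (l(j := 0)) i * r i) (\<Sum>i\<in>UNIV. (l(j := 0)) i * t i))
                 (binary_Q \<alpha> (\<Sum>i\<in>UNIV. (l(j := 1)) i * r i) (\<Sum>i\<in>UNIV. (l(j := 1)) i * t i))
             \<le> binary_Q \<alpha> (\<Sum>i\<in>UNIV. l i * r i) (\<Sum>i\<in>UNIV. l i * t i)"
    unfolding comb[of r] comb[of t] using l
    by (intro binary_Q_min_le_convex_comb[OF \<alpha>]) simp_all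
qed

lemma test_dominated_by_proj:
  fixes \<rho> \<sigma> T :: "complex^'n^'n"
  assumes "density \<rho>" "density \<sigma>" "psd T" "loewner_le T (mat 1)" "0 < \<alpha>" "\<alpha> < 1"
  shows "\<exists>Q. is_proj Q \<and> binary_Q \<alpha> (Re (trace (\<rho> ** Q))) (Re (trace (\<sigma> ** Q)))
                 \<le> binary_Q \<alpha> (Re (trace (\<rho> ** T))) (Re (trace (\<sigma> ** T)))"
proof -
  obtain U d where U: "adjoint U ** U = mat 1" "U ** adjoint U = mat 1"
    and T: "T = U ** cdiag (\<lambda>i. complex_of_real (d i)) ** adjoint U"
    using \<open>psd T\<close> hermitian_diagonalization[of T] by (auto simp: psd_def)
  \<comment> \<open>In the eigenbasis of \<open>T\<close>: \<open>tr \<rho>T = \<Sum>\<^sub>i d\<^sub>i r\<^sub>i\<close> and \<open>tr \<sigma>T = \<Sum>\<^sub>i d\<^sub>i t\<^sub>i\<close> with probability vectors \<open>r\<close>, \<open>t\<close>.\<close>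
  define r where "r i = Re ((adjoint U ** \<rho> ** U)$i$i)" for i
  define t where "t i = Re ((adjoint U ** \<sigma> ** U)$i$i)" for i
  have r: "\<And>i. 0 \<le> r i" "(\<Sum>i\<in>UNIV. r i) = 1"
    using density_unitary_conj_diag[OF assms(1) U(2)] by (simp_all add: r_def)
  have t: "\<And>i. 0 \<le> t i" "(\<Sum>i\<in>UNIV. t i) = 1"
    using density_unitary_conj_diag[OF assms(2) U(2)] by (simp_all add: t_def)
  have "\<forall>i. d i \<in> {0..1}"
    using test_eigenvalues[OF assms(3,4) U T] by blast
  then obtain e where e: "\<forall>i. e i = 0 \<or> e i = 1"
    and le: "binary_Q \<alpha> (\<Sum>i\<in>UNIV. e i * r i) (\<Sum>i\<in>UNIV. e i * t i)
               \<le> binary_Q \<alpha> (\<Sum>i\<in>UNIV. d i * r i) (\<Sum>i\<in>UNIV. d i * t i)"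
    using binary_Q_weighted_min_at_vertex[OF assms(5,6) r t] by blast
  define Q where "Q = U ** cdiag (\<lambda>i. complex_of_real (e i)) ** adjoint U"
  have "is_proj Q"
    unfolding Q_def using e by (intro is_proj_unitary_conj_cdiag U(1)) auto
  moreover have "Re (trace (X ** Q)) = (\<Sum>i\<in>UNIV. e i * Re ((adjoint U ** X ** U)$i$i))"
    and "Re (trace (X ** T)) = (\<Sum>i\<in>UNIV. d i * Re ((adjoint U ** X ** U)$i$i))" for X
    unfolding Q_def T by (rule re_trace_mult_unitary_conj_cdiag)+
  then have "binary_Q \<alpha> (Re (trace (\<rho> ** Q))) (Re (trace (\<sigma> ** Q)))
      \<le> binary_Q \<alpha> (Re (trace (\<rho> ** T))) (Re (trace (\<sigma> ** T)))"
    using le by (simp only: r_def t_def)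
  ultimately show ?thesis
    by blast
qed

lemma D_test_le_optimal_proj:
  fixes \<rho> \<sigma> P :: "complex^'n^'n"
  assumes "density \<rho>" "density \<sigma>" "0 < \<alpha>" "\<alpha> < 1"
    and opt: "\<forall>Q. is_proj Q \<longrightarrow> test_renyi \<alpha> \<rho> \<sigma> Q \<le> test_renyi \<alpha> \<rho> \<sigma> P"
  shows "D_test \<alpha> \<rho> \<sigma> \<le> test_renyi \<alpha> \<rho> \<sigma> P"
  unfolding D_test_def
proof (rule SUP_least)
  fix T :: "complex^'n^'n"
  assume "T \<in> {T. psd T \<and> loewner_le T (mat 1)}"
  then have "psd T" "loewner_le T (mat 1)"
    by simp_all
  then obtain Q where "is_proj Q"
    and le: "binary_Q \<alpha> (Re (trace (\<rho> ** Q))) (Re (trace (\<sigma> ** Q)))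
               \<le> binary_Q \<alpha> (Re (trace (\<rho> ** T))) (Re (trace (\<sigma> ** T)))"
    using test_dominated_by_proj[OF assms(1,2) _ _ assms(3,4)] by blast
  have "test_renyi \<alpha> \<rho> \<sigma> T \<le> test_renyi \<alpha> \<rho> \<sigma> Q"
    unfolding test_renyi_eq[OF assms(1,2)]
    using renyi_of_Q_antimono[OF \<open>\<alpha> < 1\<close> binary_Q_nonneg le] .
  also have "\<dots> \<le> test_renyi \<alpha> \<rho> \<sigma> P"
    using opt \<open>is_proj Q\<close> by blast
  finally show "test_renyi \<alpha> \<rho> \<sigma> T \<le> test_renyi \<alpha> \<rho> \<sigma> P" .
qed

section \<open>Refining an optimal projection\<close>

definition outer :: "complex^'n \<Rightarrow> complex^'n \<Rightarrow> complex^'n^'n" where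
  "outer x y = (\<chi> i j. x$i * cnj (y$j))"

lemma outer_mult_vec: "outer x y *v z = cinner y z *s x"
  by (simp add: outer_def vec_eq_iff matrix_vector_mult_def cinner_def sum_distrib_left algebra_simps)

lemma is_proj_outer:
  assumes "cinner x x = 1"
  shows "is_proj (outer x x)"
proof -
  have "outer x x ** outer x x = outer x x"
    using assms by (simp add: matrix_eq outer_mult_vec cinner_scale_right flip: matrix_vector_mul_assoc)
  moreover have "adjoint (outer x x) = outer x x"
    by (simp add: outer_def adjoint_def vec_eq_iff)
  ultimately show ?thesis
    by (simp add: is_proj_def)
qed

lemma trace_mult_outer: "trace (A ** outer x x) = qform A x"
proof -
  have "trace (outer x x ** A) = (\<Sum>i\<in>UNIV. \<Sum>k\<in>UNIV. x$i * cnj (x$k) * A$k$i)"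
    by (simp add: trace_def matrix_matrix_mult_def outer_def)
  also have "\<dots> = (\<Sum>k\<in>UNIV. \<Sum>i\<in>UNIV. x$i * cnj (x$k) * A$k$i)"
    by (rule sum.swap)
  also have "\<dots> = qform A x"
    by (simp add: qform_def matrix_vector_mult_def sum_distrib_left algebra_simps)
  finally show ?thesis
    by (simp only: trace_mul_sym[of A])
qed

lemma exists_unit_in_range_qform_neq_0:
  assumes P: "is_proj P" and "A \<noteq> 0" and compressed: "\<And>z. qform A (P *v z) = qform A z"
  shows "\<exists>x. cinner x x = 1 \<and> P *v x = x \<and> qform A x \<noteq> 0"
proof -
  obtain y where "qform A y \<noteq> 0"
    using matrix_eq_0_if_qform_eq_0 \<open>A \<noteq> 0\<close> by blast
  then have "qform A (P *v y) \<noteq> 0"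
    using compressed by simp
  then have "P *v y \<noteq> 0"
    by (auto simp: qform_def)
  then obtain c where "cinner (c *s (P *v y)) (c *s (P *v y)) = 1"
    and "qform A (c *s (P *v y)) = qform A (P *v y) / complex_of_real ((norm (P *v y))^2)"
    using unit_rescaling by blast
  moreover have "P *v (c *s (P *v y)) = c *s (P *v y)"
    by (simp add: vector_scalar_commute is_proj_mult_idem[OF P])
  ultimately show ?thesis
    using \<open>qform A (P *v y) \<noteq> 0\<close> \<open>P *v y \<noteq> 0\<close> by (intro exI[of _ "c *s (P *v y)"]) simp
qed

lemma is_proj_diff:
  assumes "is_proj P" "is_proj Q" "P ** Q = Q" "Q ** P = Q"
  shows "is_proj (P - Q)"
proof -
  have "(P - Q) ** (P - Q) = P - Q"
    using assms by (simp add: matrix_diff_ldistrib matrix_diff_rdistrib is_proj_def)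
  moreover have "adjoint (P - Q) = P - Q"
    using assms by (simp add: adjoint_diff is_proj_def)
  ultimately show ?thesis
    by (simp add: is_proj_def)
qed

lemma povm_split_proj:
  assumes P: "is_proj P" and x: "cinner x x = 1" "P *v x = x"
  shows "povm 3 (\<lambda>i. if i = 0 then outer x x else if i = 1 then P - outer x x else mat 1 - P)"
    and "is_proj (P - outer x x)"
proof -
  have "P ** outer x x = outer x x"
    by (simp add: matrix_eq outer_mult_vec vector_scalar_commute x(2) flip: matrix_vector_mul_assoc)
  moreover have "outer x x ** P = outer x x"
    using cinner_hermitian[OF is_proj_hermitian[OF P], of x]
    by (simp add: matrix_eq outer_mult_vec x(2) flip: matrix_vector_mul_assoc)
  ultimately show "is_proj (P - outer x x)"
    using is_proj_diff[OF P is_proj_outer[OF x(1)]] by blast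
  then show "povm 3 (\<lambda>i. if i = 0 then outer x x else if i = 1 then P - outer x x else mat 1 - P)"
    using is_proj_outer[OF x(1)] is_proj_complement[OF P]
    by (auto simp: povm_def is_proj_psd numeral_3_eq_3)
qed

lemma test_renyi_less_D_meas:
  fixes \<rho> \<sigma> P :: "complex^'n^'n"
  assumes \<rho>: "density \<rho>" and \<sigma>: "density \<sigma>" and \<alpha>: "0 < \<alpha>" "\<alpha> < 1" and P: "is_proj P"
    and x: "cinner x x = 1" "P *v x = x"
    and nonprop: "Re (qform \<rho> x) * Re (trace (\<sigma> ** P)) \<noteq> Re (qform \<sigma> x) * Re (trace (\<rho> ** P))"
  shows "test_renyi \<alpha> \<rho> \<sigma> P < D_meas \<alpha> \<rho> \<sigma>"
proof -
  \<comment> \<open>Refine the measurement \<open>{P, I - P}\<close> by splitting off the rank-one projection onto \<open>x\<close>.\<close>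
  define M :: "nat \<Rightarrow> complex^'n^'n"
    where "M i = (if i = 0 then outer x x else if i = 1 then P - outer x x else mat 1 - P)" for i
  have "povm 3 M" and PQ: "is_proj (P - outer x x)"
    unfolding M_def using povm_split_proj[OF P x] by blast+
  define a1 a b1 b where "a1 = Re (qform \<rho> x)" and "a = Re (trace (\<rho> ** P))"
    and "b1 = Re (qform \<sigma> x)" and "b = Re (trace (\<sigma> ** P))"
  have tr: "Re (trace (M 0 ** X)) = Re (qform X x)"
           "Re (trace (M 1 ** X)) = Re (trace (X ** P)) - Re (qform X x)"
           "Re (trace (M 2 ** X)) = Re (trace X) - Re (trace (X ** P))" for X
    by (simp_all add: M_def trace_mult_outer matrix_diff_rdistrib trace_sub
        trace_mul_sym[of P X] trace_mul_sym[of "outer x x" X])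
  have "0 \<le> a1" "0 \<le> b1" "0 \<le> a - a1" "0 \<le> b - b1"
    using \<rho> \<sigma> trace_psd_mult_proj(2)[OF PQ, of \<rho>] trace_psd_mult_proj(2)[OF PQ, of \<sigma>]
      tr(2)[of \<rho>] tr(2)[of \<sigma>]
    by (auto simp: a1_def a_def b1_def b_def density_def psd_qform_nonneg M_def
        trace_mul_sym[of "P - outer x x"])
  then have less: "geo_mean \<alpha> a1 b1 + geo_mean \<alpha> (a - a1) (b - b1) < geo_mean \<alpha> a b"
    using geo_mean_superadditive(2)[OF \<alpha>, of a1 "a - a1" b1 "b - b1"] nonprop
    by (simp add: a1_def a_def b1_def b_def mult.commute)
  have "{..<3::nat} = {0, 1, 2}"
    by auto
  then have "renyi \<alpha> {..<3} (\<lambda>i. Re (trace (M i ** \<rho>))) (\<lambda>i. Re (trace (M i ** \<sigma>)))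
      = renyi_of_Q \<alpha> (geo_mean \<alpha> a1 b1 + geo_mean \<alpha> (a - a1) (b - b1) + geo_mean \<alpha> (1 - a) (1 - b))"
    using \<rho> \<sigma> tr[of \<rho>] tr[of \<sigma>]
    by (simp add: renyi_eq_renyi_of_Q density_def a1_def a_def b1_def b_def add.assoc)
  moreover have "test_renyi \<alpha> \<rho> \<sigma> P = renyi_of_Q \<alpha> (geo_mean \<alpha> a b + geo_mean \<alpha> (1 - a) (1 - b))"
    using \<rho> \<sigma> by (simp add: test_renyi_eq binary_Q_def a_def b_def)
  ultimately have "test_renyi \<alpha> \<rho> \<sigma> P
      < renyi \<alpha> {..<3} (\<lambda>i. Re (trace (M i ** \<rho>))) (\<lambda>i. Re (trace (M i ** \<sigma>)))"
    using less by (simp add: renyi_of_Q_strict_antimono[OF \<alpha>(2)] geo_mean_nonneg)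
  also have "\<dots> \<le> D_meas \<alpha> \<rho> \<sigma>"
    unfolding D_meas_def using \<open>povm 3 M\<close> by (intro SUP_upper2[of "(3, M)"]) auto
  finally show ?thesis .
qed

lemma compressions_proportional:
  fixes \<rho> \<sigma> P :: "complex^'n^'n"
  assumes \<rho>: "density \<rho>" and \<sigma>: "density \<sigma>" and \<alpha>: "0 < \<alpha>" "\<alpha> < 1" and P: "is_proj P"
    and meas: "D_meas \<alpha> \<rho> \<sigma> \<le> test_renyi \<alpha> \<rho> \<sigma> P"
  shows "mscale (trace (\<sigma> ** P)) (P ** \<rho> ** P) = mscale (trace (\<rho> ** P)) (P ** \<sigma> ** P)"
proof (rule ccontr)
  define a b where "a = Re (trace (\<rho> ** P))" and "b = Re (trace (\<sigma> ** P))"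
  have "trace (\<rho> ** P) = complex_of_real a" "trace (\<sigma> ** P) = complex_of_real b"
    using \<rho> \<sigma> trace_psd_mult_proj(1)[OF P] by (simp_all add: a_def b_def density_def)
  define Y where "Y = mscale (trace (\<sigma> ** P)) (P ** \<rho> ** P) - mscale (trace (\<rho> ** P)) (P ** \<sigma> ** P)"
  have qY: "qform Y z = complex_of_real b * qform \<rho> (P *v z) - complex_of_real a * qform \<sigma> (P *v z)" for z
    by (simp add: Y_def qform_diff_matrix qform_mscale qform_proj_sandwich[OF P]
        \<open>trace (\<rho> ** P) = complex_of_real a\<close> \<open>trace (\<sigma> ** P) = complex_of_real b\<close>)
  assume "\<not> ?thesis"
  then have "Y \<noteq> 0"
    by (simp add: Y_def)
  moreover have "qform Y (P *v z) = qform Y z" for z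
    by (simp add: qY is_proj_mult_idem[OF P])
  ultimately obtain x where x: "cinner x x = 1" "P *v x = x" and "qform Y x \<noteq> 0"
    using exists_unit_in_range_qform_neq_0[OF P] by blast
  then have "Re (qform \<rho> x) * b \<noteq> Re (qform \<sigma> x) * a"
    using \<rho> \<sigma> psd_Im_qform[of \<rho> x] psd_Im_qform[of \<sigma> x]
    by (simp add: qY density_def complex_eq_iff mult.commute)
  then have "test_renyi \<alpha> \<rho> \<sigma> P < D_meas \<alpha> \<rho> \<sigma>"
    using test_renyi_less_D_meas[OF \<rho> \<sigma> \<alpha> P x] by (simp add: a_def b_def)
  with meas show False
    by simp
qed

lemma compressions_not_both_0:
  fixes \<rho> \<sigma> P :: "complex^'n^'n"
  assumes \<rho>: "density \<rho>" and \<sigma>: "density \<sigma>" and \<alpha>: "0 < \<alpha>" "\<alpha> < 1" and P: "is_proj P"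
    and opt: "\<forall>Q. is_proj Q \<longrightarrow> test_renyi \<alpha> \<rho> \<sigma> Q \<le> test_renyi \<alpha> \<rho> \<sigma> P"
    and "\<rho> \<noteq> \<sigma>" and "P ** \<rho> ** P = 0" and "P ** \<sigma> ** P = 0"
  shows False
proof -
  \<comment> \<open>\<open>P\<close> sees neither state, so its divergence is \<open>D\<^sub>\<alpha>((0,1)\<parallel>(0,1)) = 0\<close>; some rank-one projection does better.\<close>
  have "trace (X ** P) = 0" if "P ** X ** P = 0" for X
    using trace_mult_proj_sandwich[OF P, of X] that by (simp add: trace_def)
  then have "trace (\<rho> ** P) = 0" "trace (\<sigma> ** P) = 0"
    using \<open>P ** \<rho> ** P = 0\<close> \<open>P ** \<sigma> ** P = 0\<close> by simp_all
  then have "test_renyi \<alpha> \<rho> \<sigma> P = renyi_of_Q \<alpha> 1"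
    using \<rho> \<sigma> by (simp add: test_renyi_eq binary_Q_def geo_mean_def)
  have "is_proj (mat 1 :: complex^'n^'n)"
    by (simp add: is_proj_def)
  moreover have "\<rho> - \<sigma> \<noteq> 0"
    using \<open>\<rho> \<noteq> \<sigma>\<close> by simp
  ultimately obtain x where x: "cinner x x = 1" and "qform (\<rho> - \<sigma>) x \<noteq> 0"
    using exists_unit_in_range_qform_neq_0[of "mat 1" "\<rho> - \<sigma>"] by auto
  then have "Re (qform \<rho> x) \<noteq> Re (qform \<sigma> x)"
    using \<rho> \<sigma> psd_Im_qform[of \<rho> x] psd_Im_qform[of \<sigma> x]
    by (simp add: qform_diff_matrix density_def complex_eq_iff)
  moreover have "Re (qform X x) \<in> {0..1}" if "density X" for X
  proof -
    have "Re (trace (X ** (mat 1 - outer x x))) \<ge> 0"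
      using that trace_psd_mult_proj(2)[OF is_proj_complement[OF is_proj_outer[OF x]]]
      by (simp add: density_def)
    then show ?thesis
      using that by (simp add: trace_mult_complement trace_mult_outer density_def psd_qform_nonneg)
  qed
  ultimately have "binary_Q \<alpha> (Re (qform \<rho> x)) (Re (qform \<sigma> x)) < 1"
    using binary_Q_less_1[OF \<alpha>] \<rho> \<sigma> by simp
  then have "test_renyi \<alpha> \<rho> \<sigma> P < test_renyi \<alpha> \<rho> \<sigma> (outer x x)"
    using \<open>test_renyi \<alpha> \<rho> \<sigma> P = renyi_of_Q \<alpha> 1\<close>
    by (simp add: test_renyi_eq[OF \<rho> \<sigma>] trace_mult_outer
        renyi_of_Q_strict_antimono[OF \<alpha>(2) binary_Q_nonneg])
  with opt is_proj_outer[OF x] show False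
    by (simp add: not_le[symmetric])
qed

section \<open>Support projections\<close>

lemma is_proj_eq_if_range_eq:
  assumes P: "is_proj P" and Q: "is_proj Q" and "range ((*v) P) = range ((*v) Q)"
  shows "P = Q"
proof -
  have absorb: "P' ** Q' = Q'"
    if P': "is_proj P'" and range: "range ((*v) Q') \<subseteq> range ((*v) P')" for P' Q' :: "complex^'n^'n"
  proof -
    have "P' *v (Q' *v v) = Q' *v v" for v
    proof -
      obtain w where "Q' *v v = P' *v w"
        using range by blast
      then show ?thesis
        by (simp add: is_proj_mult_idem[OF P'])
    qed
    then show ?thesis
      by (simp add: matrix_eq flip: matrix_vector_mul_assoc)
  qed
  have "Q ** P = P" "P ** Q = Q"
    using absorb[OF Q] absorb[OF P] assms(3) by simp_all
  then have "P = adjoint (Q ** P)"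
    using P by (simp add: is_proj_def)
  also have "\<dots> = P ** Q"
    using P Q by (simp add: adjoint_mult is_proj_def)
  finally show ?thesis
    using \<open>P ** Q = Q\<close> by simp
qed

lemma exists_proj_onto_range:
  fixes A :: "complex^'n^'n"
  assumes "adjoint A = A"
  shows "\<exists>S. is_proj S \<and> range ((*v) S) = range ((*v) A)"
proof -
  obtain U d where U: "adjoint U ** U = mat 1" "U ** adjoint U = mat 1"
    and A: "A = U ** cdiag (\<lambda>i. complex_of_real (d i)) ** adjoint U"
    using hermitian_diagonalization[OF assms] by blast
  \<comment> \<open>\<open>S\<close> is the spectral projection onto the nonzero eigenvalues, \<open>W\<close> the pseudo-inverse of \<open>A\<close>.\<close>
  define e where "e i = (if d i = 0 then 0 else 1 :: real)" for i
  define d' where "d' i = (if d i = 0 then 0 else 1 / d i)" for i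
  define S where "S = U ** cdiag (\<lambda>i. complex_of_real (e i)) ** adjoint U"
  define W where "W = U ** cdiag (\<lambda>i. complex_of_real (d' i)) ** adjoint U"
  have mult: "(U ** cdiag a ** adjoint U) ** (U ** cdiag b ** adjoint U) = U ** cdiag (\<lambda>i. a i * b i) ** adjoint U"
    for a b
  proof -
    have "(U ** cdiag a ** adjoint U) ** (U ** cdiag b ** adjoint U)
        = U ** (cdiag a ** (adjoint U ** U) ** cdiag b) ** adjoint U"
      by (simp add: matrix_mul_assoc)
    then show ?thesis
      by (simp add: U(1) cdiag_mult)
  qed
  have "is_proj S"
    unfolding S_def by (rule is_proj_unitary_conj_cdiag[OF U(1)]) (simp add: e_def)
  have "(\<lambda>i. complex_of_real (e i) * complex_of_real (d i)) = (\<lambda>i. complex_of_real (d i))"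
    by (auto simp: e_def)
  then have SA: "S ** A = A"
    unfolding S_def A mult by simp
  have "(\<lambda>i. complex_of_real (d i) * complex_of_real (d' i)) = (\<lambda>i. complex_of_real (e i))"
    by (auto simp: e_def d'_def)
  then have AW: "A ** W = S"
    unfolding S_def W_def A mult by simp
  have "S *v x = A *v (W *v x)" "A *v x = S *v (A *v x)" for x
    by (simp_all add: matrix_vector_mul_assoc AW SA)
  then have "range ((*v) S) = range ((*v) A)"
    by (auto simp: image_def)
  with \<open>is_proj S\<close> show ?thesis
    by blast
qed

lemma supp_proj:
  assumes "adjoint A = A"
  shows "is_proj (supp_proj A)" and "range ((*v) (supp_proj A)) = range ((*v) A)"
proof -
  obtain S where S: "is_proj S" "range ((*v) S) = range ((*v) A)"
    using exists_proj_onto_range[OF assms] by blast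
  have "\<exists>!S. is_proj S \<and> range ((*v) S) = range ((*v) A)"
  proof (rule ex1I[of _ S])
    fix P
    assume "is_proj P \<and> range ((*v) P) = range ((*v) A)"
    then show "P = S"
      using S is_proj_eq_if_range_eq[of P S] by simp
  qed (use S in simp)
  then have "is_proj (supp_proj A) \<and> range ((*v) (supp_proj A)) = range ((*v) A)"
    unfolding supp_proj_def by (rule theI')
  then show "is_proj (supp_proj A)" and "range ((*v) (supp_proj A)) = range ((*v) A)"
    by simp_all
qed

lemma hermitian_kernel_subset_if_range_eq:
  assumes "adjoint A = A" "adjoint S = S" "range ((*v) S) = range ((*v) A)" and "A *v w = 0"
  shows "S *v w = 0"
proof (rule vec_eq_if_cinner_eq)
  fix u
  have "S *v u \<in> range ((*v) A)"
    using assms(3) by blast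
  then obtain z where "S *v u = A *v z"
    by blast
  then have "cinner u (S *v w) = cinner z (A *v w)"
    by (simp add: cinner_hermitian[OF assms(2)] cinner_hermitian[OF assms(1)])
  then show "cinner u (S *v w) = cinner u 0"
    using assms(4) by simp
qed

lemma kernel_subset_if_supp_proj_le:
  assumes A: "psd A" and B: "psd B" and le: "loewner_le (supp_proj A) (supp_proj B)"
    and "B *v w = 0"
  shows "A *v w = 0"
proof -
  have hA: "adjoint A = A" and hB: "adjoint B = B"
    using A B by (simp_all add: psd_def)
  have "supp_proj B *v w = 0"
    using hermitian_kernel_subset_if_range_eq[OF hB is_proj_hermitian[OF supp_proj(1)[OF hB]]
        supp_proj(2)[OF hB] \<open>B *v w = 0\<close>] .
  then have "Re (qform (supp_proj A) w) \<le> 0"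
    using psd_qform_nonneg[OF le[unfolded loewner_le_def], of w]
    by (simp add: qform_diff_matrix) (simp add: qform_eq_cinner)
  then have "supp_proj A *v w = 0"
    using supp_proj(1)[OF hA] by (simp add: qform_proj cinner_self)
  from hermitian_kernel_subset_if_range_eq[OF is_proj_hermitian[OF supp_proj(1)[OF hA]] hA
        supp_proj(2)[OF hA, symmetric] this]
  show ?thesis .
qed

lemma compression_eq_0_if_supp_proj_le:
  assumes A: "psd A" and B: "psd B" and le: "loewner_le (supp_proj A) (supp_proj B)"
    and P: "is_proj P" and "P ** B ** P = 0"
  shows "P ** A ** P = 0"
proof -
  have "A *v (P *v v) = 0" for v
  proof (rule kernel_subset_if_supp_proj_le[OF A B le])
    have "qform B (P *v v) = 0"
      using qform_proj_sandwich[OF P, of B v] \<open>P ** B ** P = 0\<close> by (simp add: qform_def)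
    then show "B *v (P *v v) = 0"
      by (rule psd_mult_eq_0_if_qform_eq_0[OF B])
  qed
  then show ?thesis
    by (simp add: matrix_eq flip: matrix_vector_mul_assoc)
qed

lemma optimal_proj_properties:
  fixes \<rho> \<sigma> P :: "complex^'n^'n"
  assumes \<rho>: "density \<rho>" and \<sigma>: "density \<sigma>" and \<alpha>: "0 < \<alpha>" "\<alpha> < 1"
    and eq: "D_test \<alpha> \<rho> \<sigma> = D_meas \<alpha> \<rho> \<sigma>" and P: "is_proj P"
    and opt: "\<forall>Q. is_proj Q \<longrightarrow> test_renyi \<alpha> \<rho> \<sigma> Q \<le> test_renyi \<alpha> \<rho> \<sigma> P"
  shows "mscale (trace (\<sigma> ** P)) (P ** \<rho> ** P) = mscale (trace (\<rho> ** P)) (P ** \<sigma> ** P)"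
    and "\<rho> \<noteq> \<sigma> \<Longrightarrow> loewner_le (supp_proj \<rho>) (supp_proj \<sigma>) \<Longrightarrow> P ** \<sigma> ** P \<noteq> 0"
    and "\<rho> \<noteq> \<sigma> \<Longrightarrow> loewner_le (supp_proj \<sigma>) (supp_proj \<rho>) \<Longrightarrow> P ** \<rho> ** P \<noteq> 0"
proof -
  have "D_meas \<alpha> \<rho> \<sigma> \<le> test_renyi \<alpha> \<rho> \<sigma> P"
    using D_test_le_optimal_proj[OF \<rho> \<sigma> \<alpha> opt] eq by simp
  then show "mscale (trace (\<sigma> ** P)) (P ** \<rho> ** P) = mscale (trace (\<rho> ** P)) (P ** \<sigma> ** P)"
    by (rule compressions_proportional[OF \<rho> \<sigma> \<alpha> P])
  have psd: "psd \<rho>" "psd \<sigma>"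
    using \<rho> \<sigma> by (simp_all add: density_def)
  show "P ** \<sigma> ** P \<noteq> 0" if "\<rho> \<noteq> \<sigma>" "loewner_le (supp_proj \<rho>) (supp_proj \<sigma>)"
    using compressions_not_both_0[OF \<rho> \<sigma> \<alpha> P opt \<open>\<rho> \<noteq> \<sigma>\<close>]
      compression_eq_0_if_supp_proj_le[OF psd that(2) P] by blast
  show "P ** \<rho> ** P \<noteq> 0" if "\<rho> \<noteq> \<sigma>" "loewner_le (supp_proj \<sigma>) (supp_proj \<rho>)"
    using compressions_not_both_0[OF \<rho> \<sigma> \<alpha> P opt \<open>\<rho> \<noteq> \<sigma>\<close>]
      compression_eq_0_if_supp_proj_le[OF psd(2,1) that(2) P] by blast
qed

theorem mainTheorem18:
  fixes \<rho> \<sigma> P :: "complex^'n^'n" and \<alpha> :: real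
  assumes "density \<rho>" and "density \<sigma>" and "0 < \<alpha>" and "\<alpha> < 1"
    and "D_test \<alpha> \<rho> \<sigma> = D_meas \<alpha> \<rho> \<sigma>"
    and "is_proj P"
    and "\<forall>Q. is_proj Q \<longrightarrow>
           renyi \<alpha> UNIV (test_map Q \<rho>) (test_map Q \<sigma>) \<le> renyi \<alpha> UNIV (test_map P \<rho>) (test_map P \<sigma>)"
  shows "mscale (trace (\<sigma> ** P)) (P ** \<rho> ** P) = mscale (trace (\<rho> ** P)) (P ** \<sigma> ** P)
       \<and> mscale (trace (\<sigma> ** (mat 1 - P))) ((mat 1 - P) ** \<rho> ** (mat 1 - P))
           = mscale (trace (\<rho> ** (mat 1 - P))) ((mat 1 - P) ** \<sigma> ** (mat 1 - P))
       \<and> (\<rho> \<noteq> \<sigma> \<longrightarrow>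
           (loewner_le (supp_proj \<rho>) (supp_proj \<sigma>) \<longrightarrow>
              P ** \<sigma> ** P \<noteq> 0 \<and> (mat 1 - P) ** \<sigma> ** (mat 1 - P) \<noteq> 0)
         \<and> (loewner_le (supp_proj \<sigma>) (supp_proj \<rho>) \<longrightarrow>
              P ** \<rho> ** P \<noteq> 0 \<and> (mat 1 - P) ** \<rho> ** (mat 1 - P) \<noteq> 0))"
proof -
  \<comment> \<open>\<open>I - P\<close> induces the same binary distributions up to relabelling, so it is optimal too.\<close>
  have "\<forall>Q. is_proj Q \<longrightarrow> test_renyi \<alpha> \<rho> \<sigma> Q \<le> test_renyi \<alpha> \<rho> \<sigma> (mat 1 - P)"
    using assms(7) test_renyi_complement[OF assms(1,2)] by simp
  note P = optimal_proj_properties[OF assms(1-7)]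
    and P' = optimal_proj_properties[OF assms(1-5) is_proj_complement[OF assms(6)] this]
  show ?thesis
    using P P' by blast
qed

end
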